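(* Let $\mathcal{F}$ be a set of connected graphs with $P_{2}\in\mathcal{F}$, and let $G$ be a finite simple graph. If $b_{\mathcal{F}}(G-X)\leq |X|$ for all $X\subseteq V(G)$, then $G$ has an $\mathcal{F}$-factor.
   Context: A graph $H$ is hypomatchable if $H-u$ has a perfect matching for every $u\in V(H)$ (in particular $K_1$ is hypomatchable). For a set $\mathcal{F}$ of connected graphs, an $\mathcal{F}$-factor of a graph is a spanning subgraph each of whose components is isomorphic to a member of $\mathcal{F}$. For a graph $H$, $b_{\mathcal{F}}(H)$ denotes the number of connected components of $H$ that are hypomatchable and have no $\mathcal{F}$-factor. $P_2$ is the path on two vertices. *)

theory Defs
  imports Main
begin

type_synonym 'a graph = "'a set \<times> 'a set set"

definition verts :: "'a graph \<Rightarrow> 'a set" where "verts G = fst G"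
definition edges :: "'a graph \<Rightarrow> 'a set set" where "edges G = snd G"

definition simple_graph :: "'a graph \<Rightarrow> bool" where
  "simple_graph G \<longleftrightarrow>
     (\<forall>e\<in>edges G. \<exists>u v. e = {u, v} \<and> u \<noteq> v \<and> u \<in> verts G \<and> v \<in> verts G)"

definition finite_simple_graph :: "'a graph \<Rightarrow> bool" where
  "finite_simple_graph G \<longleftrightarrow> simple_graph G \<and> finite (verts G)"

definition reach :: "'a graph \<Rightarrow> 'a \<Rightarrow> 'a \<Rightarrow> bool" where
  "reach G = (\<lambda>x y. {x, y} \<in> edges G)\<^sup>*\<^sup>*"

definition connected_graph :: "'a graph \<Rightarrow> bool" where
  "connected_graph G \<longleftrightarrow> verts G \<noteq> {} \<and> (\<forall>u\<in>verts G. \<forall>v\<in>verts G. reach G u v)"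

definition induced :: "'a graph \<Rightarrow> 'a set \<Rightarrow> 'a graph" where
  "induced G S = (verts G \<inter> S, {e \<in> edges G. e \<subseteq> S})"

definition del_verts :: "'a graph \<Rightarrow> 'a set \<Rightarrow> 'a graph" where
  "del_verts G X = induced G (verts G - X)"

definition components :: "'a graph \<Rightarrow> 'a set set" where
  "components G = {{v \<in> verts G. reach G u v} | u. u \<in> verts G}"

definition component_graphs :: "'a graph \<Rightarrow> 'a graph set" where
  "component_graphs G = induced G ` components G"

definition isomorphic :: "'a graph \<Rightarrow> 'b graph \<Rightarrow> bool" where
  "isomorphic G H \<longleftrightarrow> (\<exists>f. bij_betw f (verts G) (verts H) \<and>
      (\<forall>u\<in>verts G. \<forall>v\<in>verts G. {u, v} \<in> edges G \<longleftrightarrow> {f u, f v} \<in> edges H))"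

definition perfect_matching :: "'a graph \<Rightarrow> 'a set set \<Rightarrow> bool" where
  "perfect_matching G M \<longleftrightarrow> M \<subseteq> edges G \<and>
     (\<forall>v\<in>verts G. \<exists>!e. e \<in> M \<and> v \<in> e)"

definition has_perfect_matching :: "'a graph \<Rightarrow> bool" where
  "has_perfect_matching G \<longleftrightarrow> (\<exists>M. perfect_matching G M)"

definition hypomatchable :: "'a graph \<Rightarrow> bool" where
  "hypomatchable H \<longleftrightarrow> (\<forall>u\<in>verts H. has_perfect_matching (del_verts H {u}))"

definition is_factor :: "'b graph set \<Rightarrow> 'a graph \<Rightarrow> 'a set set \<Rightarrow> bool" where
  "is_factor F G E' \<longleftrightarrow> E' \<subseteq> edges G \<and>
     (\<forall>C\<in>component_graphs (verts G, E'). \<exists>H\<in>F. isomorphic C H)"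

definition has_factor :: "'b graph set \<Rightarrow> 'a graph \<Rightarrow> bool" where
  "has_factor F G \<longleftrightarrow> (\<exists>E'. is_factor F G E')"

definition b_F :: "'b graph set \<Rightarrow> 'a graph \<Rightarrow> nat" where
  "b_F F H = card {C \<in> component_graphs H. hypomatchable C \<and> \<not> has_factor F C}"

definition P2 :: "nat graph" where
  "P2 = ({0, 1}, {{0, 1}})"

end

theory Submission
  imports Defs
begin

text \<open>Choose \<open>X\<close> maximising the number of hypomatchable components of \<open>G - X\<close>
  minus \<open>|X|\<close>. By the Gallai--Edmonds strengthening of Tutte's theorem, maximality
  forces every other component of \<open>G - X\<close> to have a perfect matching, hence (as
  \<open>P\<^sub>2 \<in> F\<close>) an \<open>F\<close>-factor. The hypomatchable components are matched by Hall's
  theorem either to a neighbour in \<open>X\<close>, which together with a perfect matching of the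
  rest of the component gives a factor, or, if they have an \<open>F\<close>-factor themselves, to
  one of the surplus slots; the hypothesis on \<open>b\<^sub>F\<close> is exactly what makes Hall's
  condition hold for the components without a factor.\<close>

section \<open>Hall's theorem\<close>

lemma ex_inj_on_Un_choice:
  assumes f: "inj_on f J" "\<forall>i\<in>J. f i \<in> A i" and g: "inj_on g K" "\<forall>i\<in>K. g i \<in> A i"
    and disj: "f ` J \<inter> g ` K = {}"
  shows "\<exists>h. inj_on h (J \<union> K) \<and> (\<forall>i\<in>J \<union> K. h i \<in> A i)"
proof (intro exI conjI)
  let ?h = "\<lambda>i. if i \<in> J then f i else g i"
  show "\<forall>i\<in>J \<union> K. ?h i \<in> A i"
    using f(2) g(2) by auto
  show "inj_on ?h (J \<union> K)"
  proof (rule inj_onI)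
    fix a b
    assume ab: "a \<in> J \<union> K" "b \<in> J \<union> K" and eq: "?h a = ?h b"
    show "a = b"
    proof (cases "a \<in> J"; cases "b \<in> J")
      assume "a \<in> J" "b \<in> J"
      then show ?thesis
        using eq f(1) by (simp add: inj_on_eq_iff)
    next
      assume "a \<notin> J" "b \<notin> J"
      then show ?thesis
        using eq g(1) ab by (simp add: inj_on_eq_iff)
    next
      assume "a \<in> J" "b \<notin> J"
      moreover from this have "f a = g b" "b \<in> K"
        using eq ab by auto
      ultimately show ?thesis
        using disj by blast
    next
      assume "a \<notin> J" "b \<in> J"
      moreover from this have "g a = f b" "a \<in> K"
        using eq ab by auto
      ultimately show ?thesis
        using disj by blast
    qed
  qed
qed

lemma hall_condition_Diff_critical:
  assumes fin: "finite I" "\<forall>i\<in>I. finite (A i)"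
    and hall: "\<forall>J\<subseteq>I. card J \<le> card (\<Union>(A ` J))"
    and J: "J \<subseteq> I" "card J = card (\<Union>(A ` J))"
  shows "\<forall>K\<subseteq>I - J. card K \<le> card (\<Union>i\<in>K. A i - \<Union>(A ` J))"
proof (intro allI impI)
  fix K assume K: "K \<subseteq> I - J"
  have fin_K: "finite K" and fin_J: "finite J"
    using K J(1) fin(1) finite_subset by blast+
  have fin_UJ: "finite (\<Union>(A ` J))" and fin_UK: "finite (\<Union>i\<in>K. A i - \<Union>(A ` J))"
    using fin_J fin_K J(1) K fin(2) by (auto intro!: finite_UN_I)
  have "card K + card J = card (K \<union> J)"
    using K fin_K fin_J by (intro card_Un_disjoint[symmetric]) auto
  also have "\<dots> \<le> card (\<Union>(A ` (K \<union> J)))"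
    using hall K J(1) by (metis Diff_subset Un_subset_iff order_trans)
  also have "\<Union>(A ` (K \<union> J)) = (\<Union>i\<in>K. A i - \<Union>(A ` J)) \<union> \<Union>(A ` J)"
    by auto
  also have "card \<dots> = card (\<Union>i\<in>K. A i - \<Union>(A ` J)) + card (\<Union>(A ` J))"
    using fin_UJ fin_UK by (intro card_Un_disjoint) auto
  finally show "card K \<le> card (\<Union>i\<in>K. A i - \<Union>(A ` J))"
    using J(2) by linarith
qed

lemma hall_condition_Diff_element:
  assumes fin: "finite I" "\<forall>i\<in>I. finite (A i)"
    and surplus: "\<forall>J\<subseteq>I. J \<noteq> {} \<and> J \<noteq> I \<longrightarrow> card J < card (\<Union>(A ` J))"
    and "i\<^sub>0 \<in> I"
  shows "\<forall>K\<subseteq>I - {i\<^sub>0}. card K \<le> card (\<Union>i\<in>K. A i - {x})"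
proof (intro allI impI)
  fix K assume K: "K \<subseteq> I - {i\<^sub>0}"
  show "card K \<le> card (\<Union>i\<in>K. A i - {x})"
  proof (cases "K = {}")
    case False
    have "finite K"
      using K fin(1) finite_subset by blast
    then have "finite (\<Union>(A ` K))"
      using K fin(2) by (auto intro!: finite_UN_I)
    moreover have "K \<subseteq> I" and "K \<noteq> I"
      using K \<open>i\<^sub>0 \<in> I\<close> by auto
    then have "card K < card (\<Union>(A ` K))"
      using surplus False by simp
    moreover have "(\<Union>i\<in>K. A i - {x}) = \<Union>(A ` K) - {x}"
      by auto
    ultimately show ?thesis
      by (cases "x \<in> \<Union>(A ` K)") (simp_all add: card_Diff_singleton)
  qed simp
qed

theorem hall_marriage:
  assumes "finite I" and "\<forall>i\<in>I. finite (A i)"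
    and "\<forall>J\<subseteq>I. card J \<le> card (\<Union>(A ` J))"
  shows "\<exists>f. inj_on f I \<and> (\<forall>i\<in>I. f i \<in> A i)"
  using assms
proof (induction "card I" arbitrary: I A rule: less_induct)
  case less
  note fin = less.prems(1,2) and hall = less.prems(3)
  show ?case
  proof (cases "\<exists>J\<subseteq>I. J \<noteq> {} \<and> J \<noteq> I \<and> card J = card (\<Union>(A ` J))")
    case True
    \<comment> \<open>Match a critical family onto its neighbourhood and the rest avoiding it.\<close>
    then obtain J where J: "J \<subseteq> I" "J \<noteq> {}" "J \<noteq> I" "card J = card (\<Union>(A ` J))"
      by blast
    have "J \<subset> I" and "I - J \<subset> I"
      using J(1-3) by auto
    then have "card J < card I" and "card (I - J) < card I"
      using fin(1) by (simp_all add: psubset_card_mono)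
    moreover have "finite J" and "\<forall>K\<subseteq>J. card K \<le> card (\<Union>(A ` K))"
      using J(1) fin(1) hall finite_subset by auto
    ultimately obtain f where "inj_on f J" "\<forall>i\<in>J. f i \<in> A i"
      using less.hyps[of J A] fin(2) J(1) by auto
    moreover obtain g where "inj_on g (I - J)" "\<forall>i\<in>I - J. g i \<in> A i - \<Union>(A ` J)"
      using less.hyps[OF \<open>card (I - J) < card I\<close>, of "\<lambda>i. A i - \<Union>(A ` J)"]
        hall_condition_Diff_critical[OF fin hall J(1,4)] fin by auto
    ultimately have "\<exists>h. inj_on h (J \<union> (I - J)) \<and> (\<forall>i\<in>J \<union> (I - J). h i \<in> A i)"
      by (intro ex_inj_on_Un_choice) auto
    moreover have "J \<union> (I - J) = I"
      using J(1) by blast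
    ultimately show ?thesis
      by simp
  next
    case False
    then have surplus: "\<forall>J\<subseteq>I. J \<noteq> {} \<and> J \<noteq> I \<longrightarrow> card J < card (\<Union>(A ` J))"
      using hall by (auto simp: le_less)
    show ?thesis
    proof (cases "I = {}")
      case False
      \<comment> \<open>Without critical families any single choice can be fixed first.\<close>
      then obtain i\<^sub>0 where i\<^sub>0: "i\<^sub>0 \<in> I"
        by blast
      obtain x where x: "x \<in> A i\<^sub>0"
        using hall[rule_format, of "{i\<^sub>0}"] i\<^sub>0 by fastforce
      have "card (I - {i\<^sub>0}) < card I"
        using i\<^sub>0 fin(1) by (metis card_Diff1_less)
      then obtain g where "inj_on g (I - {i\<^sub>0})" "\<forall>i\<in>I - {i\<^sub>0}. g i \<in> A i - {x}"
        using less.hyps[of "I - {i\<^sub>0}" "\<lambda>i. A i - {x}"]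
          hall_condition_Diff_element[OF fin surplus i\<^sub>0] fin by auto
      then have "\<exists>h. inj_on h ({i\<^sub>0} \<union> (I - {i\<^sub>0}))
          \<and> (\<forall>i\<in>{i\<^sub>0} \<union> (I - {i\<^sub>0}). h i \<in> A i)"
        using x by (intro ex_inj_on_Un_choice[of "\<lambda>_. x"]) auto
      moreover have "{i\<^sub>0} \<union> (I - {i\<^sub>0}) = I"
        using i\<^sub>0 by blast
      ultimately show ?thesis
        by metis
    qed simp
  qed
qed

section \<open>Components of induced subgraphs\<close>

text \<open>Unlike \<open>induced\<close>, the vertex set is \<open>S\<close> itself, not \<open>verts G \<inter> S\<close>.\<close>

definition induced_on :: "'a graph \<Rightarrow> 'a set \<Rightarrow> 'a graph" where
  "induced_on G S = (S, {e \<in> edges G. e \<subseteq> S})"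

lemma verts_induced_on [simp]: "verts (induced_on G S) = S"
  and edges_induced_on [simp]: "edges (induced_on G S) = {e \<in> edges G. e \<subseteq> S}"
  by (simp_all add: induced_on_def verts_def edges_def)

lemma induced_induced_on: "T \<subseteq> S \<Longrightarrow> induced (induced_on G S) T = induced_on G T"
  by (auto simp: induced_on_def induced_def edges_def verts_def)

lemma del_verts_eq_induced_on: "del_verts G X = induced_on G (verts G - X)"
  by (auto simp: induced_on_def induced_def del_verts_def)

lemma inj_induced_on: "inj (induced_on G)"
  by (auto intro: injI simp: induced_on_def)

lemma induced_on_verts: "simple_graph G \<Longrightarrow> induced_on G (verts G) = G"
  unfolding simple_graph_def induced_on_def by (cases G) (auto simp: verts_def edges_def)

lemma reach_sym: "reach G x y \<Longrightarrow> reach G y x"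
  unfolding reach_def
proof (induction rule: rtranclp_induct)
  case (step y z)
  have "{z, y} \<in> edges G"
    using step(2) by (simp add: insert_commute)
  then show ?case
    using step(3) by (meson converse_rtranclp_into_rtranclp)
qed simp

lemma reach_trans: "reach G x y \<Longrightarrow> reach G y z \<Longrightarrow> reach G x z"
  unfolding reach_def by simp

lemma reach_mono: "reach G x y \<Longrightarrow> edges G \<subseteq> edges H \<Longrightarrow> reach H x y"
  unfolding reach_def by (induction rule: rtranclp_induct) (auto intro: rtranclp.rtrancl_into_rtrancl)

definition components_on :: "'a graph \<Rightarrow> 'a set \<Rightarrow> 'a set set" where
  "components_on G S = components (induced_on G S)"

lemma components_on_eq: "components_on G S = {{v \<in> S. reach (induced_on G S) u v} | u. u \<in> S}"
  by (simp add: components_on_def components_def)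

definition edge_closed :: "'a graph \<Rightarrow> 'a set \<Rightarrow> 'a set \<Rightarrow> bool" where
  "edge_closed G S C \<longleftrightarrow> (\<forall>x\<in>C. \<forall>y\<in>S. {x, y} \<in> edges G \<longrightarrow> y \<in> C)"

definition connected_on :: "'a graph \<Rightarrow> 'a set \<Rightarrow> bool" where
  "connected_on G C \<longleftrightarrow> (\<forall>u\<in>C. \<forall>v\<in>C. reach (induced_on G C) u v)"

lemma reach_edge_closed:
  "reach (induced_on G S) u v \<Longrightarrow> u \<in> C \<Longrightarrow> edge_closed G S C \<Longrightarrow> v \<in> C"
  unfolding reach_def by (induction rule: rtranclp_induct) (auto simp: edge_closed_def)

lemma reach_within_class:
  assumes "reach (induced_on G S) u v"
  shows "reach (induced_on G {w \<in> S. reach (induced_on G S) u w}) u v"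
proof -
  define C where "C = {w \<in> S. reach (induced_on G S) u w}"
  have "reach (induced_on G C) u v"
    using assms unfolding reach_def
  proof (induction rule: rtranclp_induct)
    case (step y z)
    have "reach (induced_on G S) u y" and "reach (induced_on G S) u z"
      using step(1,2) unfolding reach_def by (auto intro: rtranclp.rtrancl_into_rtrancl)
    then have "{y, z} \<in> edges (induced_on G C)"
      using step(2) unfolding C_def by auto
    then show ?case
      using step(3) by (meson rtranclp.rtrancl_into_rtrancl)
  qed simp
  then show ?thesis
    unfolding C_def .
qed

lemma edge_closed_connected_class:
  assumes "C \<subseteq> S" "edge_closed G S C" "connected_on G C" "u \<in> C"
  shows "C = {v \<in> S. reach (induced_on G S) u v}"
proof
  show "C \<subseteq> {v \<in> S. reach (induced_on G S) u v}"
  proof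
    fix v assume "v \<in> C"
    then have "reach (induced_on G C) u v"
      using assms(3,4) unfolding connected_on_def by auto
    then have "reach (induced_on G S) u v"
      by (rule reach_mono) (use assms(1) in auto)
    then show "v \<in> {v \<in> S. reach (induced_on G S) u v}"
      using \<open>v \<in> C\<close> assms(1) by auto
  qed
  show "{v \<in> S. reach (induced_on G S) u v} \<subseteq> C"
    using reach_edge_closed[of G S u _ C] assms(2,4) by blast
qed

lemma components_on_iff:
  "C \<in> components_on G S \<longleftrightarrow> C \<noteq> {} \<and> C \<subseteq> S \<and> edge_closed G S C \<and> connected_on G C"
proof
  assume "C \<in> components_on G S"
  then obtain u where u: "u \<in> S" "C = {v \<in> S. reach (induced_on G S) u v}"
    unfolding components_on_eq by blast
  have "u \<in> C"
    using u unfolding reach_def by blast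
  moreover have "edge_closed G S C"
    unfolding edge_closed_def
  proof (intro ballI impI)
    fix x y assume xy: "x \<in> C" "y \<in> S" "{x, y} \<in> edges G"
    then have "{x, y} \<in> edges (induced_on G S)"
      using u(2) by auto
    then show "y \<in> C"
      using xy u(2) unfolding reach_def by (auto intro: rtranclp.rtrancl_into_rtrancl)
  qed
  moreover have "connected_on G C"
    unfolding connected_on_def
  proof (intro ballI)
    fix x y assume "x \<in> C" "y \<in> C"
    then have "reach (induced_on G C) u x" "reach (induced_on G C) u y"
      using reach_within_class[of G S u] u(2) by auto
    then show "reach (induced_on G C) x y"
      by (meson reach_sym reach_trans)
  qed
  ultimately show "C \<noteq> {} \<and> C \<subseteq> S \<and> edge_closed G S C \<and> connected_on G C"
    using u(2) by blast
next
  assume C: "C \<noteq> {} \<and> C \<subseteq> S \<and> edge_closed G S C \<and> connected_on G C"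
  then obtain u where "u \<in> C"
    by auto
  then have "C = {v \<in> S. reach (induced_on G S) u v}"
    using edge_closed_connected_class[of C S G u] C by blast
  then show "C \<in> components_on G S"
    unfolding components_on_eq using \<open>u \<in> C\<close> C by blast
qed

lemma components_on_subset: "C \<in> components_on G S \<Longrightarrow> C \<subseteq> S"
  and components_on_nonempty: "C \<in> components_on G S \<Longrightarrow> C \<noteq> {}"
  by (simp_all add: components_on_iff)

lemma components_on_class:
  "C \<in> components_on G S \<Longrightarrow> u \<in> C \<Longrightarrow> C = {v \<in> S. reach (induced_on G S) u v}"
  using edge_closed_connected_class[of C S G u] components_on_iff[of C G S] by blast

lemma components_on_disjoint:
  assumes "C \<in> components_on G S" "D \<in> components_on G S" "x \<in> C" "x \<in> D"
  shows "C = D"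
  using components_on_class[OF assms(1,3)] components_on_class[OF assms(2,4)] by simp

lemma components_on_cover:
  assumes "x \<in> S"
  obtains C where "C \<in> components_on G S" "x \<in> C"
proof
  show "{v \<in> S. reach (induced_on G S) x v} \<in> components_on G S"
    using assms unfolding components_on_eq by blast
  show "x \<in> {v \<in> S. reach (induced_on G S) x v}"
    using assms unfolding reach_def by simp
qed

lemma Union_components_on: "\<Union>(components_on G S) = S"
proof
  show "\<Union>(components_on G S) \<subseteq> S"
    using components_on_subset by blast
  show "S \<subseteq> \<Union>(components_on G S)"
    by (meson UnionI components_on_cover subsetI)
qed

lemma pairwise_disjnt_components_on: "pairwise disjnt (components_on G S)"
  unfolding pairwise_def disjnt_def by (metis components_on_disjoint disjoint_iff)

lemma finite_components_on: "finite S \<Longrightarrow> finite (components_on G S)"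
  using components_on_subset by (meson PowI finite_Pow_iff finite_subset subsetI)

lemma component_on_superset:
  assumes "C \<in> components_on G S" "S \<subseteq> S'" "\<forall>x\<in>C. \<forall>y\<in>S' - S. {x, y} \<notin> edges G"
  shows "C \<in> components_on G S'"
proof -
  have C: "C \<noteq> {}" "C \<subseteq> S" "edge_closed G S C" "connected_on G C"
    using assms(1) by (simp_all add: components_on_iff)
  then have "edge_closed G S' C"
    using assms(3) unfolding edge_closed_def by blast
  with C assms(2) show ?thesis
    by (simp add: components_on_iff order_trans)
qed

lemma component_on_subset:
  assumes "C \<in> components_on G S" "C \<subseteq> S'" "S' \<subseteq> S"
  shows "C \<in> components_on G S'"
proof -
  have C: "C \<noteq> {}" "edge_closed G S C" "connected_on G C"
    using assms(1) by (simp_all add: components_on_iff)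
  then have "edge_closed G S' C"
    using assms(3) unfolding edge_closed_def by blast
  with C assms(2) show ?thesis
    by (simp add: components_on_iff)
qed

lemma component_on_component_Diff:
  assumes "L \<in> components_on G S" "C \<in> components_on G (L - Z)"
  shows "C \<in> components_on G (S - Z)"
proof -
  have L: "L \<subseteq> S" "edge_closed G S L"
    using assms(1) by (simp_all add: components_on_iff)
  have C: "C \<noteq> {}" "C \<subseteq> L - Z" "edge_closed G (L - Z) C" "connected_on G C"
    using assms(2) by (simp_all add: components_on_iff)
  have "edge_closed G (S - Z) C"
    using L C unfolding edge_closed_def by blast
  with C L show ?thesis
    by (auto simp: components_on_iff)
qed


definition count_components :: "'a graph \<Rightarrow> ('a set \<Rightarrow> bool) \<Rightarrow> 'a set \<Rightarrow> nat" where
  "count_components G P S = card {C \<in> components_on G S. P C}"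

lemma count_components_mono:
  assumes "finite S" and "\<And>C. C \<in> components_on G S \<Longrightarrow> P C \<Longrightarrow> Q C"
  shows "count_components G P S \<le> count_components G Q S"
  unfolding count_components_def using assms finite_components_on[OF assms(1), of G]
  by (intro card_mono) auto

lemma card_le_count_components:
  assumes "finite S" and "\<K> \<subseteq> components_on G S" and "\<forall>C\<in>\<K>. P C"
  shows "card \<K> \<le> count_components G P S"
  unfolding count_components_def using assms finite_components_on[OF assms(1), of G]
  by (intro card_mono) auto

lemma components_on_Diff_within_component:
  assumes L: "L \<in> components_on G S" and Z: "Z \<subseteq> L"
  shows "components_on G S - {L} \<union> components_on G (L - Z) \<subseteq> components_on G (S - Z)"
    and "(components_on G S - {L}) \<inter> components_on G (L - Z) = {}"
proof -
  have "C \<in> components_on G (S - Z)" if C: "C \<in> components_on G S" "C \<noteq> L" for C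
  proof -
    have "C \<inter> L = {}"
      using components_on_disjoint[OF C(1) L] C(2) by blast
    then have "C \<subseteq> S - Z"
      using components_on_subset[OF C(1)] Z by blast
    then show ?thesis
      using component_on_subset[OF C(1)] by blast
  qed
  then show "components_on G S - {L} \<union> components_on G (L - Z) \<subseteq> components_on G (S - Z)"
    using component_on_component_Diff[OF L] by blast
  have "C = L" if C: "C \<in> components_on G S" "C \<in> components_on G (L - Z)" for C
  proof -
    obtain x where "x \<in> C"
      using components_on_nonempty[OF C(2)] by blast
    moreover from this have "x \<in> L"
      using components_on_subset[OF C(2)] by blast
    ultimately show "C = L"
      using components_on_disjoint[OF C(1) L] by blast
  qed
  then show "(components_on G S - {L}) \<inter> components_on G (L - Z) = {}"
    by blast
qed

lemma count_components_split:
  assumes fin: "finite S" and L: "L \<in> components_on G S" and Z: "Z \<subseteq> L"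
  shows "count_components G P S + count_components G P (L - Z)
    \<le> count_components G P (S - Z) + (if P L then 1 else 0)"
proof -
  define \<A> where "\<A> = {C \<in> components_on G S - {L}. P C}"
  define \<B> where "\<B> = {C \<in> components_on G (L - Z). P C}"
  have sub: "\<A> \<union> \<B> \<subseteq> {C \<in> components_on G (S - Z). P C}"
    using components_on_Diff_within_component(1)[OF L Z] unfolding \<A>_def \<B>_def by blast
  moreover have fin_SZ: "finite {C \<in> components_on G (S - Z). P C}"
    using finite_components_on[OF finite_Diff[OF fin]] by simp
  ultimately have fin_\<A>\<B>: "finite \<A>" "finite \<B>"
    using finite_subset by auto
  moreover have "\<A> \<inter> \<B> = {}"
    using components_on_Diff_within_component(2)[OF L Z] unfolding \<A>_def \<B>_def by blast
  ultimately have "card \<A> + card \<B> = card (\<A> \<union> \<B>)"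
    by (simp add: card_Un_disjoint)
  also have "\<dots> \<le> count_components G P (S - Z)"
    unfolding count_components_def using card_mono[OF fin_SZ sub] .
  finally have "card \<A> + card \<B> \<le> count_components G P (S - Z)" .
  moreover have "count_components G P S \<le> card \<A> + (if P L then 1 else 0)"
  proof -
    have "{C \<in> components_on G S. P C} = \<A> \<union> (if P L then {L} else {})"
      unfolding \<A>_def using L by auto
    then show ?thesis
      unfolding count_components_def using fin_\<A>\<B>(1) by (cases "P L") (simp_all add: card_insert_if)
  qed
  ultimately show ?thesis
    unfolding \<B>_def count_components_def by linarith
qed

abbreviation odd_card :: "'a set \<Rightarrow> bool" where
  "odd_card C \<equiv> odd (card C)"

lemma even_sum_card_iff:
  "finite \<A> \<Longrightarrow> even (sum card \<A>) \<longleftrightarrow> even (card {C \<in> \<A>. odd_card C})"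
proof (induction rule: finite_induct)
  case (insert A \<A>)
  have "finite {C \<in> \<A>. odd_card C}"
    using insert(1) by simp
  moreover have "{C \<in> insert A \<A>. odd_card C}
      = (if odd_card A then insert A {C \<in> \<A>. odd_card C} else {C \<in> \<A>. odd_card C})"
    by auto
  ultimately show ?case
    using insert by auto
qed simp

lemma even_card_iff_even_count_odd:
  assumes "finite S"
  shows "even (card S) \<longleftrightarrow> even (count_components G odd_card S)"
proof -
  have "card S = sum card (components_on G S)"
    using card_Union_disjoint[OF pairwise_disjnt_components_on, of G S]
      assms components_on_subset finite_subset
    by (metis Union_components_on)
  then show ?thesis
    unfolding count_components_def using even_sum_card_iff[OF finite_components_on[OF assms]] by simp
qed

lemma even_count_odd_components_Diff:
  assumes "finite A" "even (card A)" "Z \<subseteq> A"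
  shows "even (count_components G odd_card (A - Z) + card Z)"
proof -
  have "card (A - Z) + card Z = card A"
    using assms by (simp add: card_Diff_subset card_mono finite_subset)
  then show ?thesis
    using assms even_card_iff_even_count_odd[of "A - Z" G] by (metis even_add finite_Diff)
qed


section \<open>Perfect matchings and Tutte's theorem\<close>

definition matchable_on :: "'a graph \<Rightarrow> 'a set \<Rightarrow> bool" where
  "matchable_on G S = has_perfect_matching (induced_on G S)"

lemma matchable_on_Union:
  assumes disj: "pairwise disjnt \<P>" and match: "\<forall>B\<in>\<P>. matchable_on G B"
  shows "matchable_on G (\<Union>\<P>)"
proof -
  obtain M where M: "\<forall>B\<in>\<P>. perfect_matching (induced_on G B) (M B)"
    using match unfolding matchable_on_def has_perfect_matching_def by metis
  have M_sub: "e \<in> edges G \<and> e \<subseteq> B" if "B \<in> \<P>" "e \<in> M B" for B e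
    using M that unfolding perfect_matching_def by auto
  have "perfect_matching (induced_on G (\<Union>\<P>)) (\<Union>(M ` \<P>))"
    unfolding perfect_matching_def
  proof
    show "\<Union>(M ` \<P>) \<subseteq> edges (induced_on G (\<Union>\<P>))"
      using M_sub by auto
    show "\<forall>v\<in>verts (induced_on G (\<Union>\<P>)). \<exists>!e. e \<in> \<Union>(M ` \<P>) \<and> v \<in> e"
    proof
      fix v assume "v \<in> verts (induced_on G (\<Union>\<P>))"
      then obtain B where B: "B \<in> \<P>" "v \<in> B"
        by auto
      then obtain e where e: "e \<in> M B" "v \<in> e"
        and uniq: "\<And>e'. e' \<in> M B \<Longrightarrow> v \<in> e' \<Longrightarrow> e' = e"
        using M unfolding perfect_matching_def by (metis verts_induced_on)
      show "\<exists>!e. e \<in> \<Union>(M ` \<P>) \<and> v \<in> e"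
      proof (rule ex1I[of _ e])
        show "e \<in> \<Union>(M ` \<P>) \<and> v \<in> e"
          using e B by blast
        fix e' assume e': "e' \<in> \<Union>(M ` \<P>) \<and> v \<in> e'"
        then obtain B' where B': "B' \<in> \<P>" "e' \<in> M B'"
          by blast
        then have "v \<in> B'"
          using M_sub e' by blast
        then have "B' = B"
          using disj B B'(1) unfolding pairwise_def disjnt_def by blast
        then show "e' = e"
          using uniq B' e' by blast
      qed
    qed
  qed
  then show ?thesis
    unfolding matchable_on_def has_perfect_matching_def by blast
qed

lemma matchable_on_edge: "{a, b} \<in> edges G \<Longrightarrow> matchable_on G {a, b}"
  unfolding matchable_on_def has_perfect_matching_def perfect_matching_def
  by (rule exI[of _ "{{a, b}}"]) auto

lemma hypomatchable_induced_on_iff: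
  "hypomatchable (induced_on G C) \<longleftrightarrow> (\<forall>u\<in>C. matchable_on G (C - {u}))"
proof -
  have "del_verts (induced_on G C) {u} = induced_on G (C - {u})" for u
    unfolding del_verts_def by (simp add: induced_induced_on)
  then show ?thesis
    unfolding hypomatchable_def matchable_on_def by simp
qed

definition neighbours :: "'a graph \<Rightarrow> 'a set \<Rightarrow> 'a set \<Rightarrow> 'a set" where
  "neighbours G X C = {x \<in> X. \<exists>w\<in>C. {x, w} \<in> edges G}"

lemma matchable_on_insert_neighbour:
  assumes crit: "\<forall>w\<in>C. matchable_on G (C - {w})" and "x \<in> neighbours G X C" and "x \<notin> C"
  shows "matchable_on G (insert x C)"
proof -
  obtain w where w: "w \<in> C" "{x, w} \<in> edges G"
    using assms(2) unfolding neighbours_def by blast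
  have "pairwise disjnt {{x, w}, C - {w}}"
    using \<open>x \<notin> C\<close> by (auto simp: pairwise_insert disjnt_def)
  moreover have "\<forall>B\<in>{{x, w}, C - {w}}. matchable_on G B"
    using crit w matchable_on_edge[OF w(2)] by blast
  moreover have "\<Union>{{x, w}, C - {w}} = insert x C"
    using w(1) by blast
  ultimately show ?thesis
    using matchable_on_Union by metis
qed

lemma component_on_Diff_Union_neighbours:
  assumes "\<K> \<subseteq> components_on G (S - X)" and "C \<in> \<K>"
  shows "C \<in> components_on G (S - \<Union>(neighbours G X ` \<K>))"
proof (rule component_on_superset)
  show "C \<in> components_on G (S - X)"
    using assms by blast
  show "S - X \<subseteq> S - \<Union>(neighbours G X ` \<K>)"
    unfolding neighbours_def by blast
  show "\<forall>x\<in>C. \<forall>y\<in>S - \<Union>(neighbours G X ` \<K>) - (S - X). {x, y} \<notin> edges G"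
  proof (intro ballI)
    fix x y assume "x \<in> C" "y \<in> S - \<Union>(neighbours G X ` \<K>) - (S - X)"
    then have "y \<in> X" "y \<notin> neighbours G X C"
      using assms(2) by auto
    then show "{x, y} \<notin> edges G"
      using \<open>x \<in> C\<close> unfolding neighbours_def by (auto simp: insert_commute)
  qed
qed

lemma pairwise_disjnt_attach:
  assumes disj: "pairwise disjnt \<C>" and inj: "inj_on g H" and outside: "g ` H \<inter> \<Union>\<C> = {}"
  shows "pairwise disjnt ((\<lambda>C. if C \<in> H then insert (g C) C else C) ` \<C>)"
proof (rule pairwise_imageI)
  fix C D assume CD: "C \<in> \<C>" "D \<in> \<C>" "C \<noteq> D"
  have "C \<inter> D = {}"
    using disj CD unfolding pairwise_def disjnt_def by blast
  moreover have "C \<in> H \<Longrightarrow> g C \<notin> D" and "D \<in> H \<Longrightarrow> g D \<notin> C"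
    using outside CD(1,2) by blast+
  moreover have "C \<in> H \<Longrightarrow> D \<in> H \<Longrightarrow> g C \<noteq> g D"
    using inj CD(3) by (meson inj_on_eq_iff)
  ultimately show "disjnt (if C \<in> H then insert (g C) C else C) (if D \<in> H then insert (g D) D else D)"
    unfolding disjnt_def by (cases "C \<in> H"; cases "D \<in> H") simp_all
qed

lemma Union_attach:
  assumes "H \<subseteq> \<C>"
  shows "\<Union>((\<lambda>C. if C \<in> H then insert (g C) C else C) ` \<C>) = \<Union>\<C> \<union> g ` H"
proof
  show "\<Union>((\<lambda>C. if C \<in> H then insert (g C) C else C) ` \<C>) \<subseteq> \<Union>\<C> \<union> g ` H"
    by (auto split: if_splits)
  show "\<Union>\<C> \<union> g ` H \<subseteq> \<Union>((\<lambda>C. if C \<in> H then insert (g C) C else C) ` \<C>)"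
  proof
    fix x assume "x \<in> \<Union>\<C> \<union> g ` H"
    then consider C where "C \<in> \<C>" "x \<in> C" | C where "C \<in> H" "x = g C"
      by blast
    then show "x \<in> \<Union>((\<lambda>C. if C \<in> H then insert (g C) C else C) ` \<C>)"
    proof cases
      case (1 C)
      then show ?thesis
        by (intro UnionI[of "if C \<in> H then insert (g C) C else C"]) auto
    next
      case (2 C)
      then show ?thesis
        using assms by (intro UnionI[of "insert (g C) C"]) auto
    qed
  qed
qed


lemma ex_arg_max_finite:
  fixes f :: "'a \<Rightarrow> 'b::linorder"
  assumes "finite A" and "A \<noteq> {}"
  obtains x where "x \<in> A" and "\<forall>y\<in>A. f y \<le> f x"
proof -
  have "Max (f ` A) \<in> f ` A"
    using assms by simp
  then obtain x where "x \<in> A" "f x = Max (f ` A)"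
    by auto
  then show ?thesis
    using that assms by simp
qed

text \<open>For \<open>P = odd_card\<close> this is the deficiency in Tutte's condition.\<close>

definition excess :: "'a graph \<Rightarrow> ('a set \<Rightarrow> bool) \<Rightarrow> 'a set \<Rightarrow> 'a set \<Rightarrow> int" where
  "excess G P S Y = int (count_components G P (S - Y)) - int (card Y)"

lemma ex_excess_maximizer:
  assumes "finite S"
  obtains X where "X \<subseteq> S" and "\<forall>Y\<subseteq>S. excess G P S Y \<le> excess G P S X"
proof -
  have "finite (Pow S)" and "Pow S \<noteq> {}"
    using assms by auto
  then obtain X where "X \<in> Pow S" "\<forall>Y\<in>Pow S. excess G P S Y \<le> excess G P S X"
    by (rule ex_arg_max_finite)
  then show ?thesis
    using that by auto
qed

lemma excess_add_component_part:
  assumes fin: "finite S" and "Y \<subseteq> S" and K: "K \<in> components_on G (S - Y)" and "Z \<subseteq> K"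
  shows "excess G P S Y + int (count_components G P (K - Z))
    \<le> excess G P S (Y \<union> Z) + int (card Z) + (if P K then 1 else 0)"
proof -
  have "Z \<subseteq> S - Y"
    using components_on_subset[OF K] \<open>Z \<subseteq> K\<close> by blast
  then have "card (Y \<union> Z) = card Y + card Z"
    using fin \<open>Y \<subseteq> S\<close> by (intro card_Un_disjoint) (auto intro: finite_subset)
  moreover have "S - Y - Z = S - (Y \<union> Z)"
    by blast
  then have "count_components G P (S - Y) + count_components G P (K - Z)
      \<le> count_components G P (S - (Y \<union> Z)) + (if P K then 1 else 0)"
    using count_components_split[OF finite_Diff[OF fin] K \<open>Z \<subseteq> K\<close>, of P] by simp
  ultimately show ?thesis
    unfolding excess_def by (cases "P K") simp_all
qed

definition maximal_barrier :: "'a graph \<Rightarrow> 'a set \<Rightarrow> 'a set \<Rightarrow> bool" where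
  "maximal_barrier G S Y \<longleftrightarrow> Y \<subseteq> S
     \<and> (\<forall>W\<subseteq>S. excess G odd_card S W \<le> excess G odd_card S Y)
     \<and> (\<forall>W\<subseteq>S. excess G odd_card S W = excess G odd_card S Y \<longrightarrow> card W \<le> card Y)"

lemma ex_maximal_barrier:
  assumes "finite S"
  obtains Y where "maximal_barrier G S Y"
proof -
  define \<X> where "\<X> = {X. X \<subseteq> S \<and> (\<forall>Y\<subseteq>S. excess G odd_card S Y \<le> excess G odd_card S X)}"
  have "\<X> \<subseteq> Pow S"
    unfolding \<X>_def by blast
  then have "finite \<X>"
    using finite_subset assms by blast
  moreover obtain X where "X \<subseteq> S" "\<forall>Y\<subseteq>S. excess G odd_card S Y \<le> excess G odd_card S X"
    using ex_excess_maximizer[OF assms] .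
  then have "\<X> \<noteq> {}"
    unfolding \<X>_def by blast
  ultimately obtain Y where Y: "Y \<in> \<X>" and card_max: "\<forall>W\<in>\<X>. card W \<le> card Y"
    using ex_arg_max_finite[of \<X> card] by blast
  have "card W \<le> card Y" if "W \<subseteq> S" "excess G odd_card S W = excess G odd_card S Y" for W
  proof -
    have "W \<in> \<X>"
      using Y that unfolding \<X>_def by simp
    then show ?thesis
      using card_max by blast
  qed
  then have "maximal_barrier G S Y"
    using Y unfolding maximal_barrier_def \<X>_def by blast
  then show ?thesis
    using that by blast
qed

lemma maximal_barrier_grow:
  assumes "maximal_barrier G S Y" and "Y \<subseteq> W" "W \<subseteq> S" "card Y < card W"
  shows "excess G odd_card S W < excess G odd_card S Y"
proof -
  have "excess G odd_card S W \<le> excess G odd_card S Y"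
    and "excess G odd_card S W = excess G odd_card S Y \<longrightarrow> card W \<le> card Y"
    using assms(1,3) unfolding maximal_barrier_def by blast+
  then show ?thesis
    using assms(4) by linarith
qed

lemma maximal_barrier_component_odd:
  assumes fin: "finite S" and Y: "maximal_barrier G S Y" and K: "K \<in> components_on G (S - Y)"
  shows "odd (card K)"
proof (rule ccontr)
  assume even: "\<not> odd (card K)"
  have Y_sub: "Y \<subseteq> S"
    using Y by (simp add: maximal_barrier_def)
  obtain v where v: "v \<in> K"
    using components_on_nonempty[OF K] by blast
  have K_sub: "K \<subseteq> S - Y"
    using components_on_subset[OF K] .
  have fin_K: "finite K"
    using K_sub fin finite_subset by blast
  moreover have "card K > 0"
    using v fin_K by (auto simp: card_gt_0_iff)
  ultimately have "odd (card (K - {v}))"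
    using even card_Diff_singleton[OF v] by presburger
  then have "odd (count_components G odd_card (K - {v}))"
    using even_card_iff_even_count_odd[of "K - {v}" G] fin_K by simp
  then have "count_components G odd_card (K - {v}) \<ge> 1"
    by (simp add: Suc_le_eq odd_pos)
  moreover have "excess G odd_card S Y + int (count_components G odd_card (K - {v}))
      \<le> excess G odd_card S (Y \<union> {v}) + 1"
    using excess_add_component_part[OF fin Y_sub K, of "{v}" odd_card] v even by simp
  ultimately have "excess G odd_card S Y \<le> excess G odd_card S (Y \<union> {v})"
    by linarith
  moreover have "card Y < card (Y \<union> {v})"
    using v K_sub finite_subset[OF Y_sub fin] by (simp add: subset_iff)
  moreover have "Y \<union> {v} \<subseteq> S"
    using v K_sub Y_sub by blast
  ultimately show False
    using maximal_barrier_grow[OF Y Un_upper1] by (meson leD)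
qed

text \<open>A violating set \<open>Z\<close> would, together with \<open>v\<close>, enlarge the barrier without lowering
  the excess, because by parity it violates the condition by at least two.\<close>

lemma maximal_barrier_component_tutte:
  assumes fin: "finite S" and Y: "maximal_barrier G S Y" and K: "K \<in> components_on G (S - Y)"
    and "v \<in> K" and Z: "Z \<subseteq> K - {v}"
  shows "count_components G odd_card (K - {v} - Z) \<le> card Z"
proof (rule ccontr)
  assume violated: "\<not> ?thesis"
  have Y_sub: "Y \<subseteq> S"
    using Y by (simp add: maximal_barrier_def)
  have K_sub: "K \<subseteq> S - Y"
    using components_on_subset[OF K] .
  have fin_K: "finite K"
    using K_sub fin finite_subset by blast
  have odd_K: "odd (card K)"
    using maximal_barrier_component_odd[OF fin Y K] .
  moreover have "card K > 0"
    using \<open>v \<in> K\<close> fin_K by (auto simp: card_gt_0_iff)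
  ultimately have "even (card (K - {v}))"
    using odd_K card_Diff_singleton[OF \<open>v \<in> K\<close>] by presburger
  then have "even (count_components G odd_card (K - {v} - Z) + card Z)"
    using even_count_odd_components_Diff fin_K Z by blast
  moreover have "K - insert v Z = K - {v} - Z"
    by blast
  ultimately have gap: "count_components G odd_card (K - insert v Z) \<ge> card Z + 2"
    using violated by presburger
  have "v \<notin> Z" and "finite Z"
    using Z fin_K finite_subset by auto
  then have "card (insert v Z) = card Z + 1"
    by simp
  moreover have "excess G odd_card S Y + int (count_components G odd_card (K - insert v Z))
      \<le> excess G odd_card S (Y \<union> insert v Z) + int (card (insert v Z)) + 1"
    using excess_add_component_part[OF fin Y_sub K, where Z = "insert v Z" and P = odd_card]
      odd_K Z \<open>v \<in> K\<close> by (simp add: subset_iff)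
  ultimately have "excess G odd_card S Y \<le> excess G odd_card S (Y \<union> insert v Z)"
    using gap by linarith
  moreover have "Y \<union> insert v Z \<subseteq> S"
    using \<open>v \<in> K\<close> Z K_sub Y_sub by blast
  moreover have "card Y < card (Y \<union> insert v Z)"
    using \<open>v \<in> K\<close> K_sub \<open>finite Z\<close> finite_subset[OF Y_sub fin]
    by (intro psubset_card_mono) auto
  ultimately show False
    using maximal_barrier_grow[OF Y Un_upper1] by (meson leD)
qed


lemma card_le_count_components_Diff_neighbours:
  assumes "finite S" and "\<K> \<subseteq> components_on G (S - X)" and "\<forall>C\<in>\<K>. P C"
  shows "card \<K> \<le> count_components G P (S - \<Union>(neighbours G X ` \<K>))"
proof -
  have "\<K> \<subseteq> components_on G (S - \<Union>(neighbours G X ` \<K>))"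
    using component_on_Diff_Union_neighbours[OF assms(2)] by blast
  then show ?thesis
    using card_le_count_components[OF finite_Diff[OF assms(1)] _ assms(3)] by blast
qed

lemma matchable_on_if_components_matched:
  assumes "X \<subseteq> S" and g: "inj_on g (components_on G (S - X))" "g ` components_on G (S - X) = X"
    and attached: "\<forall>C\<in>components_on G (S - X). g C \<in> neighbours G X C"
    and critical: "\<forall>C\<in>components_on G (S - X). \<forall>w\<in>C. matchable_on G (C - {w})"
  shows "matchable_on G S"
proof -
  define \<C> where "\<C> = components_on G (S - X)"
  have Union_\<C>: "\<Union>\<C> = S - X"
    unfolding \<C>_def by (rule Union_components_on)
  have "matchable_on G (\<Union>((\<lambda>C. if C \<in> \<C> then insert (g C) C else C) ` \<C>))"
  proof (rule matchable_on_Union)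
    show "pairwise disjnt ((\<lambda>C. if C \<in> \<C> then insert (g C) C else C) ` \<C>)"
      using pairwise_disjnt_attach[OF pairwise_disjnt_components_on g(1)] g(2) Union_\<C>
      unfolding \<C>_def by blast
    show "\<forall>B\<in>(\<lambda>C. if C \<in> \<C> then insert (g C) C else C) ` \<C>. matchable_on G B"
    proof
      fix B assume "B \<in> (\<lambda>C. if C \<in> \<C> then insert (g C) C else C) ` \<C>"
      then obtain C where C: "C \<in> \<C>" "B = insert (g C) C"
        by auto
      have "g C \<notin> C"
        using g(2) Union_\<C> C(1) unfolding \<C>_def by blast
      then show "matchable_on G B"
        using matchable_on_insert_neighbour[of C G "g C" X] critical attached C unfolding \<C>_def
        by simp
    qed
  qed
  moreover have "\<Union>((\<lambda>C. if C \<in> \<C> then insert (g C) C else C) ` \<C>) = S"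
    using Union_attach[of \<C> \<C> g] Union_\<C> g(2) \<open>X \<subseteq> S\<close> unfolding \<C>_def by auto
  ultimately show ?thesis
    by simp
qed

lemma card_components_maximal_barrier:
  assumes fin: "finite S" and tutte_cond: "\<forall>Z\<subseteq>S. count_components G odd_card (S - Z) \<le> card Z"
    and Y: "maximal_barrier G S Y"
  shows "card (components_on G (S - Y)) = card Y"
proof -
  have "excess G odd_card S {} \<le> excess G odd_card S Y" and "excess G odd_card S Y \<le> 0"
    using Y tutte_cond unfolding maximal_barrier_def excess_def by auto
  moreover have "0 \<le> excess G odd_card S {}"
    by (simp add: excess_def)
  ultimately have "count_components G odd_card (S - Y) = card Y"
    unfolding excess_def by linarith
  moreover have "{C \<in> components_on G (S - Y). odd_card C} = components_on G (S - Y)"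
    using maximal_barrier_component_odd[OF fin Y] by blast
  ultimately show ?thesis
    unfolding count_components_def by simp
qed

lemma maximal_barrier_matching:
  assumes fin: "finite S" and tutte_cond: "\<forall>Z\<subseteq>S. count_components G odd_card (S - Z) \<le> card Z"
    and Y: "maximal_barrier G S Y"
  obtains g where "inj_on g (components_on G (S - Y))" and "g ` components_on G (S - Y) = Y"
    and "\<forall>C\<in>components_on G (S - Y). g C \<in> neighbours G Y C"
proof -
  define \<C> where "\<C> = components_on G (S - Y)"
  have Y_sub: "Y \<subseteq> S"
    using Y by (simp add: maximal_barrier_def)
  have "\<exists>g. inj_on g \<C> \<and> (\<forall>C\<in>\<C>. g C \<in> neighbours G Y C)"
  proof (rule hall_marriage)
    show "finite \<C>"
      unfolding \<C>_def using fin by (simp add: finite_components_on)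
    show "\<forall>C\<in>\<C>. finite (neighbours G Y C)"
      using finite_subset[OF Y_sub fin] unfolding neighbours_def by simp
    show "\<forall>\<K>\<subseteq>\<C>. card \<K> \<le> card (\<Union>(neighbours G Y ` \<K>))"
    proof (intro allI impI)
      fix \<K> assume "\<K> \<subseteq> \<C>"
      then have "card \<K> \<le> count_components G odd_card (S - \<Union>(neighbours G Y ` \<K>))"
        using card_le_count_components_Diff_neighbours[OF fin, where P = odd_card]
          maximal_barrier_component_odd[OF fin Y] unfolding \<C>_def by blast
      also have "\<dots> \<le> card (\<Union>(neighbours G Y ` \<K>))"
        using Y_sub by (intro tutte_cond[rule_format]) (auto simp: neighbours_def)
      finally show "card \<K> \<le> card (\<Union>(neighbours G Y ` \<K>))" .
    qed
  qed
  then obtain g where g: "inj_on g \<C>" "\<forall>C\<in>\<C>. g C \<in> neighbours G Y C"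
    by blast
  moreover have "g ` \<C> = Y"
  proof (rule card_subset_eq)
    show "finite Y" "g ` \<C> \<subseteq> Y"
      using finite_subset[OF Y_sub fin] g(2) unfolding neighbours_def by auto
    show "card (g ` \<C>) = card Y"
      using card_image[OF g(1)] card_components_maximal_barrier[OF fin tutte_cond Y]
      unfolding \<C>_def by simp
  qed
  ultimately show ?thesis
    using that unfolding \<C>_def by blast
qed

theorem tutte:
  assumes "finite S" and "\<forall>Z\<subseteq>S. count_components G odd_card (S - Z) \<le> card Z"
  shows "matchable_on G S"
  using assms
proof (induction "card S" arbitrary: S rule: less_induct)
  case less
  note fin = less.prems(1) and tutte_cond = less.prems(2)
  obtain Y where Y: "maximal_barrier G S Y"
    using ex_maximal_barrier[OF fin] .
  have Y_sub: "Y \<subseteq> S"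
    using Y by (simp add: maximal_barrier_def)
  have critical: "\<forall>w\<in>C. matchable_on G (C - {w})" if C: "C \<in> components_on G (S - Y)" for C
  proof
    fix w assume "w \<in> C"
    have "C - {w} \<subset> S"
      using components_on_subset[OF C] \<open>w \<in> C\<close> by blast
    then have "card (C - {w}) < card S" and "finite (C - {w})"
      using fin by (simp add: psubset_card_mono, meson finite_subset psubset_imp_subset)
    moreover have "\<forall>Z\<subseteq>C - {w}. count_components G odd_card (C - {w} - Z) \<le> card Z"
      using maximal_barrier_component_tutte[OF fin Y C \<open>w \<in> C\<close>] by blast
    ultimately show "matchable_on G (C - {w})"
      using less.hyps by blast
  qed
  obtain g where "inj_on g (components_on G (S - Y))" "g ` components_on G (S - Y) = Y"
    "\<forall>C\<in>components_on G (S - Y). g C \<in> neighbours G Y C"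
    using maximal_barrier_matching[OF fin tutte_cond Y] .
  then show ?case
    using matchable_on_if_components_matched[OF Y_sub] critical by blast
qed


abbreviation hypomatchable_on :: "'a graph \<Rightarrow> 'a set \<Rightarrow> bool" where
  "hypomatchable_on G C \<equiv> hypomatchable (induced_on G C)"

text \<open>The Gallai--Edmonds form of Tutte's theorem: it suffices to count hypomatchable
  components, since the components left by a maximal barrier are odd and, by Tutte's
  theorem applied to each of them minus a vertex, hypomatchable.\<close>

theorem matchable_on_if_count_hypomatchable:
  assumes fin: "finite S"
    and cond: "\<forall>Z\<subseteq>S. count_components G (hypomatchable_on G) (S - Z) \<le> card Z"
  shows "matchable_on G S"
proof (rule ccontr)
  assume "\<not> matchable_on G S"
  then obtain Z where Z: "Z \<subseteq> S" "card Z < count_components G odd_card (S - Z)"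
    using tutte[OF fin] by (meson not_le)
  obtain Y where Y: "maximal_barrier G S Y"
    using ex_maximal_barrier[OF fin] .
  have Y_sub: "Y \<subseteq> S"
    using Y by (simp add: maximal_barrier_def)
  have "excess G odd_card S Z \<le> excess G odd_card S Y"
    using Y Z(1) by (simp add: maximal_barrier_def)
  then have excess_pos: "card Y < count_components G odd_card (S - Y)"
    using Z(2) unfolding excess_def by linarith
  have "hypomatchable_on G K" if K: "K \<in> components_on G (S - Y)" for K
    unfolding hypomatchable_induced_on_iff
  proof
    fix v assume "v \<in> K"
    have "finite (K - {v})"
      using components_on_subset[OF K] fin finite_subset by blast
    then show "matchable_on G (K - {v})"
      using maximal_barrier_component_tutte[OF fin Y K \<open>v \<in> K\<close>] by (blast intro: tutte)
  qed
  then have "count_components G odd_card (S - Y) \<le> count_components G (hypomatchable_on G) (S - Y)"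
    using count_components_mono[OF finite_Diff[OF fin], where P = odd_card and Q = "hypomatchable_on G"]
    by blast
  also have "\<dots> \<le> card Y"
    using cond Y_sub by blast
  finally show False
    using excess_pos by simp
qed


section \<open>Factors\<close>

lemma isomorphic_sym:
  assumes "isomorphic G H"
  shows "isomorphic H G"
proof -
  obtain f where f: "bij_betw f (verts G) (verts H)"
    and edge: "\<forall>u\<in>verts G. \<forall>v\<in>verts G. {u, v} \<in> edges G \<longleftrightarrow> {f u, f v} \<in> edges H"
    using assms unfolding isomorphic_def by blast
  define g where "g = inv_into (verts G) f"
  have g: "bij_betw g (verts H) (verts G)"
    unfolding g_def by (rule bij_betw_inv_into[OF f])
  have "{u, v} \<in> edges H \<longleftrightarrow> {g u, g v} \<in> edges G" if "u \<in> verts H" "v \<in> verts H" for u v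
  proof -
    have "f (g u) = u" "f (g v) = v"
      using that f unfolding g_def by (simp_all add: bij_betw_inv_into_right)
    moreover have "g u \<in> verts G" "g v \<in> verts G"
      using that g by (simp_all add: bij_betwE)
    ultimately show ?thesis
      using edge by metis
  qed
  then show ?thesis
    unfolding isomorphic_def using g by blast
qed

lemma isomorphic_trans:
  assumes "isomorphic G H" and "isomorphic H K"
  shows "isomorphic G K"
proof -
  obtain f where f: "bij_betw f (verts G) (verts H)"
    and f_edge: "\<forall>u\<in>verts G. \<forall>v\<in>verts G. {u, v} \<in> edges G \<longleftrightarrow> {f u, f v} \<in> edges H"
    using assms(1) unfolding isomorphic_def by blast
  obtain g where g: "bij_betw g (verts H) (verts K)"
    and g_edge: "\<forall>u\<in>verts H. \<forall>v\<in>verts H. {u, v} \<in> edges H \<longleftrightarrow> {g u, g v} \<in> edges K"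
    using assms(2) unfolding isomorphic_def by blast
  have "bij_betw (g \<circ> f) (verts G) (verts K)"
    using f g by (rule bij_betw_trans)
  moreover have "\<forall>u\<in>verts G. \<forall>v\<in>verts G.
      {u, v} \<in> edges G \<longleftrightarrow> {(g \<circ> f) u, (g \<circ> f) v} \<in> edges K"
    using f_edge g_edge bij_betwE[OF f] by simp
  ultimately show ?thesis
    unfolding isomorphic_def by blast
qed

lemma isomorphic_edge_P2:
  assumes "a \<noteq> b"
  shows "isomorphic ({a, b}, {{a, b}}) P2"
proof -
  define f where "f x = (if x = a then 0 else 1 :: nat)" for x
  have "bij_betw f {a, b} {0, 1}"
    using assms unfolding f_def bij_betw_def inj_on_def by auto
  moreover have "{u, v} = {a, b} \<longleftrightarrow> {f u, f v} = {0, 1}" if "u \<in> {a, b}" "v \<in> {a, b}" for u v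
    using that assms unfolding f_def by (auto simp: doubleton_eq_iff)
  ultimately show ?thesis
    unfolding isomorphic_def P2_def verts_def edges_def by auto
qed

lemma has_factor_edge:
  assumes sG: "simple_graph G" and e: "{a, b} \<in> edges G" and P2: "\<exists>H\<in>F. isomorphic H P2"
  shows "has_factor F (induced_on G {a, b})"
proof -
  have ab: "a \<noteq> b"
    using sG e unfolding simple_graph_def by (metis doubleton_eq_iff)
  define E :: "'a graph" where "E = ({a, b}, {{a, b}})"
  have reach: "reach E u v" if "u \<in> {a, b}" "v \<in> {a, b}" for u v
  proof (cases "u = v")
    case False
    then have "{u, v} \<in> edges E"
      using that unfolding E_def edges_def by auto
    then show ?thesis
      unfolding reach_def by (rule r_into_rtranclp)
  qed (simp add: reach_def)
  have "components E = {{a, b}}"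
    unfolding components_def using reach by (auto simp: E_def verts_def)
  then have "component_graphs E = {E}"
    unfolding component_graphs_def E_def induced_def verts_def edges_def by auto
  moreover obtain H where "H \<in> F" "isomorphic E H"
    using P2 isomorphic_edge_P2[OF ab] isomorphic_sym isomorphic_trans unfolding E_def by blast
  ultimately have "is_factor F (induced_on G {a, b}) {{a, b}}"
    unfolding is_factor_def using e unfolding E_def by auto
  then show ?thesis
    unfolding has_factor_def by blast
qed


lemma component_graphs_induced_on:
  "component_graphs (induced_on G S) = induced_on G ` components_on G S"
proof -
  have "induced (induced_on G S) K = induced_on G K" if "K \<in> components_on G S" for K
    using induced_induced_on[OF components_on_subset[OF that]] .
  then show ?thesis
    unfolding component_graphs_def components_on_def by (auto simp: image_iff)
qed

lemma component_on_edge_closed: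
  assumes K: "K \<in> components_on G S" and "B \<subseteq> S" and closed: "edge_closed G S B"
    and "x \<in> K" "x \<in> B"
  shows "K \<in> components_on G B"
proof -
  have "K \<subseteq> B"
  proof
    fix v assume "v \<in> K"
    then have "reach (induced_on G S) x v"
      using components_on_class[OF K \<open>x \<in> K\<close>] by blast
    then show "v \<in> B"
      using reach_edge_closed[OF _ \<open>x \<in> B\<close> closed] by blast
  qed
  then show ?thesis
    using component_on_subset[OF K _ \<open>B \<subseteq> S\<close>] by blast
qed

lemma Union_edge_sets_within_block:
  assumes disj: "pairwise disjnt \<P>" and E: "\<forall>B\<in>\<P>. \<forall>e\<in>E B. e \<noteq> {} \<and> e \<subseteq> B"
    and "B \<in> \<P>"
  shows "{e \<in> \<Union>(E ` \<P>). e \<subseteq> B} = E B"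
proof
  show "E B \<subseteq> {e \<in> \<Union>(E ` \<P>). e \<subseteq> B}"
    using E \<open>B \<in> \<P>\<close> by blast
  show "{e \<in> \<Union>(E ` \<P>). e \<subseteq> B} \<subseteq> E B"
  proof
    fix e assume "e \<in> {e \<in> \<Union>(E ` \<P>). e \<subseteq> B}"
    then obtain B' where B': "B' \<in> \<P>" "e \<in> E B'" "e \<subseteq> B"
      by blast
    have e: "e \<noteq> {}" "e \<subseteq> B'"
      using E B'(1,2) by auto
    then obtain x where "x \<in> B" "x \<in> B'"
      using B'(3) by blast
    then have "B' = B"
      using disj B'(1) \<open>B \<in> \<P>\<close> unfolding pairwise_def disjnt_def by blast
    then show "e \<in> E B"
      using B' by simp
  qed
qed

text \<open>Factors of disjoint blocks combine: no edge of the combined factor joins two blocks,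
  so each of its components lies in a single block and is a component of that block's
  factor.\<close>

lemma has_factor_Union:
  assumes sG: "simple_graph G" and disj: "pairwise disjnt \<P>"
    and factor: "\<forall>B\<in>\<P>. has_factor F (induced_on G B)"
  shows "has_factor F (induced_on G (\<Union>\<P>))"
proof -
  define S where "S = \<Union>\<P>"
  obtain E where E: "\<forall>B\<in>\<P>. is_factor F (induced_on G B) (E B)"
    using factor unfolding has_factor_def by metis
  have E_sub: "\<forall>B\<in>\<P>. \<forall>e\<in>E B. e \<in> edges G \<and> e \<subseteq> B"
    using E unfolding is_factor_def by auto
  then have E_block: "\<forall>B\<in>\<P>. \<forall>e\<in>E B. e \<noteq> {} \<and> e \<subseteq> B"
    using sG unfolding simple_graph_def by blast
  define H :: "'a graph" where "H = (S, \<Union>(E ` \<P>))"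
  have H_S: "induced_on H S = H"
    unfolding induced_on_def H_def S_def edges_def using E_sub by auto
  have H_B: "induced_on H B = (B, E B)" if "B \<in> \<P>" for B
    using Union_edge_sets_within_block[OF disj E_block that]
    unfolding induced_on_def H_def edges_def by simp
  have closed_B: "edge_closed H S B" if B: "B \<in> \<P>" for B
    unfolding edge_closed_def
  proof (intro ballI impI)
    fix x y assume xy: "x \<in> B" "y \<in> S" "{x, y} \<in> edges H"
    then obtain B' where B': "B' \<in> \<P>" "{x, y} \<in> E B'"
      unfolding H_def edges_def by auto
    then have "{x, y} \<subseteq> B'"
      using E_sub by blast
    then have "B' = B"
      using disj B B'(1) xy(1) unfolding pairwise_def disjnt_def by blast
    then show "y \<in> B"
      using \<open>{x, y} \<subseteq> B'\<close> by blast
  qed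
  have "\<exists>F'\<in>F. isomorphic C F'" if C: "C \<in> component_graphs (S, \<Union>(E ` \<P>))" for C
  proof -
    have "C \<in> component_graphs (induced_on H S)"
      using C H_S unfolding H_def by simp
    then obtain K where K: "K \<in> components_on H S" "C = induced_on H K"
      unfolding component_graphs_induced_on by blast
    obtain u where u: "u \<in> K"
      using components_on_nonempty[OF K(1)] by blast
    then obtain B where B: "B \<in> \<P>" "u \<in> B"
      using components_on_subset[OF K(1)] unfolding S_def by blast
    have "B \<subseteq> S"
      using B(1) unfolding S_def by blast
    then have "K \<in> components_on H B"
      using component_on_edge_closed[OF K(1) _ closed_B[OF B(1)] u B(2)] by blast
    then have "C \<in> component_graphs (induced_on H B)"
      using K(2) unfolding component_graphs_induced_on by blast
    then have "C \<in> component_graphs (verts (induced_on G B), E B)"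
      using H_B[OF B(1)] by simp
    then show ?thesis
      using E B(1) unfolding is_factor_def by blast
  qed
  moreover have "\<Union>(E ` \<P>) \<subseteq> edges (induced_on G S)"
    using E_sub unfolding S_def by auto
  ultimately have "is_factor F (induced_on G S) (\<Union>(E ` \<P>))"
    unfolding is_factor_def by simp
  then show ?thesis
    unfolding has_factor_def S_def by blast
qed

lemma has_factor_if_matchable:
  assumes sG: "simple_graph G" and P2: "\<exists>H\<in>F. isomorphic H P2" and "matchable_on G S"
  shows "has_factor F (induced_on G S)"
proof -
  obtain M where M: "perfect_matching (induced_on G S) M"
    using assms(3) unfolding matchable_on_def has_perfect_matching_def by blast
  have M_sub: "e \<in> edges G \<and> e \<subseteq> S" if "e \<in> M" for e
    using M that unfolding perfect_matching_def by auto
  have unique: "\<exists>!e. e \<in> M \<and> v \<in> e" if "v \<in> S" for v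
    using M that unfolding perfect_matching_def by simp
  have "\<Union>M = S"
    using M_sub unique by blast
  moreover have "pairwise disjnt M"
    unfolding pairwise_def disjnt_def using M_sub unique by blast
  moreover have "has_factor F (induced_on G e)" if e: "e \<in> M" for e
  proof -
    obtain a b where "e = {a, b}"
      using M_sub[OF e] sG unfolding simple_graph_def by blast
    then show ?thesis
      using has_factor_edge[OF sG _ P2] M_sub[OF e] by blast
  qed
  ultimately show ?thesis
    using has_factor_Union[OF sG, of M F] by blast
qed

abbreviation hypomatchable_without_factor :: "'b graph set \<Rightarrow> 'a graph \<Rightarrow> 'a set \<Rightarrow> bool" where
  "hypomatchable_without_factor F G C \<equiv> hypomatchable_on G C \<and> \<not> has_factor F (induced_on G C)"

lemma b_F_del_verts:
  "b_F F (del_verts G X)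
    = count_components G (hypomatchable_without_factor F G) (verts G - X)"
proof -
  have "component_graphs (del_verts G X) = induced_on G ` components_on G (verts G - X)"
    unfolding del_verts_eq_induced_on by (rule component_graphs_induced_on)
  moreover have "{C \<in> induced_on G ` \<A>. hypomatchable C \<and> \<not> has_factor F C}
      = induced_on G ` {C \<in> \<A>. hypomatchable_on G C \<and> \<not> has_factor F (induced_on G C)}" for \<A>
    by blast
  ultimately show ?thesis
    unfolding b_F_def count_components_def
    by (simp add: card_image inj_on_subset[OF inj_induced_on])
qed


section \<open>The factor theorem\<close>

lemma matchable_on_non_hypomatchable_component:
  assumes fin: "finite S" and "X \<subseteq> S"
    and max: "\<forall>Y\<subseteq>S. excess G (hypomatchable_on G) S Y \<le> excess G (hypomatchable_on G) S X"
    and L: "L \<in> components_on G (S - X)" and "\<not> hypomatchable_on G L"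
  shows "matchable_on G L"
proof (rule matchable_on_if_count_hypomatchable)
  show "finite L"
    using components_on_subset[OF L] fin finite_subset by blast
  show "\<forall>Z\<subseteq>L. count_components G (hypomatchable_on G) (L - Z) \<le> card Z"
  proof (intro allI impI)
    fix Z assume "Z \<subseteq> L"
    have "excess G (hypomatchable_on G) S X + int (count_components G (hypomatchable_on G) (L - Z))
        \<le> excess G (hypomatchable_on G) S (X \<union> Z) + int (card Z)"
      using excess_add_component_part[OF fin \<open>X \<subseteq> S\<close> L \<open>Z \<subseteq> L\<close>, where P = "hypomatchable_on G"]
        \<open>\<not> hypomatchable_on G L\<close> by simp
    moreover have "X \<union> Z \<subseteq> S"
      using \<open>X \<subseteq> S\<close> \<open>Z \<subseteq> L\<close> components_on_subset[OF L] by blast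
    then have "excess G (hypomatchable_on G) S (X \<union> Z) \<le> excess G (hypomatchable_on G) S X"
      using max by blast
    ultimately show "count_components G (hypomatchable_on G) (L - Z) \<le> card Z"
      by linarith
  qed
qed

lemma UN_Inl_Un_Inr:
  "(\<Union>C\<in>\<K>. Inl ` f C \<union> (if P C then Inr ` T else {}))
    = Inl ` (\<Union>C\<in>\<K>. f C) \<union> (if \<exists>C\<in>\<K>. P C then Inr ` T else {})"
  by (auto split: if_splits)

lemma card_Inl_Un_Inr:
  "finite N \<Longrightarrow> finite T \<Longrightarrow> card (Inl ` N \<union> Inr ` T) = card N + card T"
  by (subst card_Un_disjoint) (auto simp: card_image)

text \<open>Hall's condition for matching the hypomatchable components of \<open>S - X\<close> into \<open>X\<close>,
  where a component that has an \<open>F\<close>-factor may instead take one of \<open>excess X\<close> spare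
  slots: sets of components without factors are controlled by the hypothesis on \<open>b_F\<close>,
  all others by the maximality of \<open>X\<close>.\<close>

lemma hall_condition_hypomatchable_components:
  fixes F :: "'b graph set" and G :: "'a graph"
  assumes fin: "finite S" and "X \<subseteq> S"
    and max: "\<forall>Y\<subseteq>S. excess G (hypomatchable_on G) S Y \<le> excess G (hypomatchable_on G) S X"
    and cond: "\<forall>Y\<subseteq>S. count_components G (hypomatchable_without_factor F G) (S - Y) \<le> card Y"
    and \<K>: "\<K> \<subseteq> {C \<in> components_on G (S - X). hypomatchable_on G C}"
  shows "card \<K> \<le> card (\<Union>C\<in>\<K>. Inl ` neighbours G X C
    \<union> (if has_factor F (induced_on G C) then Inr ` {..<nat (excess G (hypomatchable_on G) S X)} else {}))"
proof -
  define s where "s = nat (excess G (hypomatchable_on G) S X)"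
  define N where "N = \<Union>(neighbours G X ` \<K>)"
  have "N \<subseteq> X"
    unfolding N_def neighbours_def by blast
  then have "N \<subseteq> S" and fin_N: "finite N"
    using \<open>X \<subseteq> S\<close> fin by (auto intro: rev_finite_subset)
  have card_A: "card (\<Union>C\<in>\<K>. Inl ` neighbours G X C
      \<union> (if has_factor F (induced_on G C) then Inr ` {..<s} else {}))
    = card N + (if \<exists>C\<in>\<K>. has_factor F (induced_on G C) then s else 0)"
    unfolding UN_Inl_Un_Inr N_def[symmetric] using fin_N by (simp add: card_Inl_Un_Inr card_image)
  show ?thesis
  proof (cases "\<exists>C\<in>\<K>. has_factor F (induced_on G C)")
    case False
    have "card \<K> \<le> count_components G (hypomatchable_without_factor F G) (S - N)"
      unfolding N_def using \<K> False
      by (intro card_le_count_components_Diff_neighbours[OF fin]) auto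
    also have "\<dots> \<le> card N"
      using cond \<open>N \<subseteq> S\<close> by blast
    finally show ?thesis
      using card_A False unfolding s_def by simp
  next
    case True
    have "card \<K> \<le> count_components G (hypomatchable_on G) (S - N)"
      unfolding N_def using \<K>
      by (intro card_le_count_components_Diff_neighbours[OF fin]) auto
    moreover have "excess G (hypomatchable_on G) S N \<le> excess G (hypomatchable_on G) S X"
      using max \<open>N \<subseteq> S\<close> by blast
    moreover have "0 \<le> excess G (hypomatchable_on G) S X"
      using max[rule_format, of "{}"] by (simp add: excess_def)
    ultimately show ?thesis
      using card_A True unfolding excess_def s_def by simp
  qed
qed

lemma hypomatchable_components_slot_assignment:
  fixes F :: "'b graph set" and G :: "'a graph" and S X :: "'a set"
  defines "\<H> \<equiv> {C \<in> components_on G (S - X). hypomatchable_on G C}"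
    and "s \<equiv> nat (excess G (hypomatchable_on G) S X)"
  assumes fin: "finite S" and "X \<subseteq> S"
    and max: "\<forall>Y\<subseteq>S. excess G (hypomatchable_on G) S Y \<le> excess G (hypomatchable_on G) S X"
    and cond: "\<forall>Y\<subseteq>S. count_components G (hypomatchable_without_factor F G) (S - Y) \<le> card Y"
  obtains f :: "'a set \<Rightarrow> 'a + nat"
  where "inj_on f \<H>" and "f ` \<H> = Inl ` X \<union> Inr ` {..<s}"
    and "\<forall>C\<in>\<H>. f C \<in> Inl ` neighbours G X C
      \<union> (if has_factor F (induced_on G C) then Inr ` {..<s} else {})"
proof -
  define A where "A = (\<lambda>C. Inl ` neighbours G X C
    \<union> (if has_factor F (induced_on G C) then Inr ` {..<s} else {}))"
  have fin_X: "finite X"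
    using \<open>X \<subseteq> S\<close> fin finite_subset by blast
  have fin_\<H>: "finite \<H>"
    unfolding \<H>_def using finite_components_on[OF finite_Diff[OF fin], of G X] by simp
  have "\<exists>f. inj_on f \<H> \<and> (\<forall>C\<in>\<H>. f C \<in> A C)"
  proof (rule hall_marriage[OF fin_\<H>])
    show "\<forall>C\<in>\<H>. finite (A C)"
      unfolding A_def neighbours_def using fin_X by simp
    show "\<forall>\<K>\<subseteq>\<H>. card \<K> \<le> card (\<Union>(A ` \<K>))"
      using hall_condition_hypomatchable_components[OF fin \<open>X \<subseteq> S\<close> max cond]
      unfolding A_def \<H>_def s_def by blast
  qed
  then obtain f where f: "inj_on f \<H>" "\<forall>C\<in>\<H>. f C \<in> A C"
    by blast
  \<comment> \<open>All of \<open>X\<close> and all spare slots are used, since there are exactly \<open>|X| + s\<close>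
    hypomatchable components.\<close>
  have "0 \<le> excess G (hypomatchable_on G) S X"
    using max[rule_format, of "{}"] by (simp add: excess_def)
  then have "card \<H> = card X + s"
    unfolding \<H>_def s_def excess_def count_components_def by linarith
  moreover have "card (Inl ` X \<union> Inr ` {..<s} :: ('a + nat) set) = card X + s"
    using fin_X by (simp add: card_Inl_Un_Inr)
  moreover have "f ` \<H> \<subseteq> Inl ` X \<union> Inr ` {..<s}"
    using f(2) unfolding A_def neighbours_def by (auto split: if_splits)
  ultimately have "f ` \<H> = Inl ` X \<union> Inr ` {..<s}"
    using card_image[OF f(1)] fin_X by (intro card_subset_eq) auto
  then show ?thesis
    using that f unfolding A_def by blast
qed

lemma hypomatchable_components_assignment:
  fixes F :: "'b graph set" and G :: "'a graph" and S X :: "'a set"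
  defines "\<H> \<equiv> {C \<in> components_on G (S - X). hypomatchable_on G C}"
  assumes fin: "finite S" and "X \<subseteq> S"
    and max: "\<forall>Y\<subseteq>S. excess G (hypomatchable_on G) S Y \<le> excess G (hypomatchable_on G) S X"
    and cond: "\<forall>Y\<subseteq>S. count_components G (hypomatchable_without_factor F G) (S - Y) \<le> card Y"
  obtains \<M> g where "\<M> \<subseteq> \<H>" and "inj_on g \<M>" and "g ` \<M> = X"
    and "\<forall>C\<in>\<M>. g C \<in> neighbours G X C"
    and "\<forall>C\<in>\<H> - \<M>. has_factor F (induced_on G C)"
proof -
  define s where "s = nat (excess G (hypomatchable_on G) S X)"
  obtain f :: "'a set \<Rightarrow> 'a + nat" where f: "inj_on f \<H>" and f_onto: "f ` \<H> = Inl ` X \<union> Inr ` {..<s}"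
    and f_in: "\<forall>C\<in>\<H>. f C \<in> Inl ` neighbours G X C
      \<union> (if has_factor F (induced_on G C) then Inr ` {..<s} else {})"
    unfolding \<H>_def s_def by (rule hypomatchable_components_slot_assignment[OF fin \<open>X \<subseteq> S\<close> max cond])
  define \<M> where "\<M> = {C \<in> \<H>. f C \<in> Inl ` X}"
  have f_\<M>: "f C = Inl (projl (f C))" if "C \<in> \<M>" for C
    using that unfolding \<M>_def by auto
  show ?thesis
  proof
    show "\<M> \<subseteq> \<H>"
      unfolding \<M>_def by blast
    show "inj_on (projl \<circ> f) \<M>"
      using f f_\<M> unfolding \<M>_def inj_on_def by (metis (mono_tags, lifting) comp_apply mem_Collect_eq)
    show "(projl \<circ> f) ` \<M> = X"
    proof
      show "(projl \<circ> f) ` \<M> \<subseteq> X"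
        unfolding \<M>_def by auto
      show "X \<subseteq> (projl \<circ> f) ` \<M>"
      proof
        fix x assume "x \<in> X"
        then obtain C where "C \<in> \<H>" "f C = Inl x"
          using f_onto by (metis UnCI imageE imageI)
        then have "C \<in> \<M>" and "(projl \<circ> f) C = x"
          unfolding \<M>_def using \<open>x \<in> X\<close> by auto
        then show "x \<in> (projl \<circ> f) ` \<M>"
          by (metis image_eqI)
      qed
    qed
    show "\<forall>C\<in>\<M>. (projl \<circ> f) C \<in> neighbours G X C"
    proof
      fix C assume "C \<in> \<M>"
      then have "Inl (projl (f C)) \<in> Inl ` neighbours G X C
          \<union> (if has_factor F (induced_on G C) then Inr ` {..<s} else {})"
        using f_in f_\<M> unfolding \<M>_def by (metis (no_types, lifting) mem_Collect_eq)
      then show "(projl \<circ> f) C \<in> neighbours G X C"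
        by (auto split: if_splits)
    qed
    show "\<forall>C\<in>\<H> - \<M>. has_factor F (induced_on G C)"
      using f_in unfolding \<M>_def neighbours_def by (auto split: if_splits)
  qed
qed

lemma has_factor_attach_components:
  assumes sG: "simple_graph G" and P2: "\<exists>H\<in>F. isomorphic H P2" and "X \<subseteq> S"
    and \<H>: "\<H> \<subseteq> components_on G (S - X)" and g: "inj_on g \<H>" "g ` \<H> = X"
    and attached: "\<forall>C\<in>\<H>. g C \<in> neighbours G X C \<and> hypomatchable_on G C"
    and rest: "\<forall>C\<in>components_on G (S - X) - \<H>. has_factor F (induced_on G C)"
  shows "has_factor F (induced_on G S)"
proof -
  define \<C> where "\<C> = components_on G (S - X)"
  have Union_\<C>: "\<Union>\<C> = S - X"
    unfolding \<C>_def by (rule Union_components_on)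
  have "pairwise disjnt ((\<lambda>C. if C \<in> \<H> then insert (g C) C else C) ` \<C>)"
    using pairwise_disjnt_attach[OF pairwise_disjnt_components_on g(1)] g(2) Union_\<C>
    unfolding \<C>_def by blast
  moreover have "has_factor F (induced_on G B)"
    if B: "B \<in> (\<lambda>C. if C \<in> \<H> then insert (g C) C else C) ` \<C>" for B
  proof -
    obtain C where C: "C \<in> \<C>" "B = (if C \<in> \<H> then insert (g C) C else C)"
      using B by blast
    show ?thesis
    proof (cases "C \<in> \<H>")
      case True
      have "g C \<notin> C"
        using g(2) Union_\<C> C(1) True by blast
      moreover have "g C \<in> neighbours G X C" and critical: "\<forall>w\<in>C. matchable_on G (C - {w})"
        using attached True unfolding hypomatchable_induced_on_iff by blast+
      ultimately have "matchable_on G (insert (g C) C)"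
        using matchable_on_insert_neighbour[OF critical] by blast
      then show ?thesis
        using has_factor_if_matchable[OF sG P2] C(2) True by simp
    next
      case False
      then show ?thesis
        using rest C unfolding \<C>_def by simp
    qed
  qed
  ultimately have "has_factor F (induced_on G (\<Union>((\<lambda>C. if C \<in> \<H> then insert (g C) C else C) ` \<C>)))"
    using has_factor_Union[OF sG] by blast
  moreover have "\<Union>((\<lambda>C. if C \<in> \<H> then insert (g C) C else C) ` \<C>) = S"
    using Union_attach[of \<H> \<C> g] \<H> Union_\<C> g(2) \<open>X \<subseteq> S\<close> unfolding \<C>_def by auto
  ultimately show ?thesis
    by simp
qed

lemma has_factor_if_excess_maximizer:
  fixes F :: "'b graph set"
  assumes sG: "simple_graph G" and P2: "\<exists>H\<in>F. isomorphic H P2" and fin: "finite S" and "X \<subseteq> S"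
    and max: "\<forall>Y\<subseteq>S. excess G (hypomatchable_on G) S Y \<le> excess G (hypomatchable_on G) S X"
    and cond: "\<forall>Y\<subseteq>S. count_components G (hypomatchable_without_factor F G) (S - Y) \<le> card Y"
  shows "has_factor F (induced_on G S)"
proof -
  obtain \<M> g where \<M>: "\<M> \<subseteq> {C \<in> components_on G (S - X). hypomatchable_on G C}"
    and g: "inj_on g \<M>" "g ` \<M> = X" "\<forall>C\<in>\<M>. g C \<in> neighbours G X C"
    and unmatched: "\<forall>C\<in>{C \<in> components_on G (S - X). hypomatchable_on G C} - \<M>.
      has_factor F (induced_on G C)"
    by (rule hypomatchable_components_assignment[OF fin \<open>X \<subseteq> S\<close> max cond])
  show ?thesis
  proof (rule has_factor_attach_components[OF sG P2 \<open>X \<subseteq> S\<close> _ g(1,2)])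
    show "\<M> \<subseteq> components_on G (S - X)"
      using \<M> by blast
    show "\<forall>C\<in>\<M>. g C \<in> neighbours G X C \<and> hypomatchable_on G C"
      using \<M> g(3) by blast
    show "\<forall>C\<in>components_on G (S - X) - \<M>. has_factor F (induced_on G C)"
    proof
      fix C assume C: "C \<in> components_on G (S - X) - \<M>"
      show "has_factor F (induced_on G C)"
      proof (cases "hypomatchable_on G C")
        case True
        then show ?thesis
          using unmatched C by blast
      next
        case False
        then show ?thesis
          using matchable_on_non_hypomatchable_component[OF fin \<open>X \<subseteq> S\<close> max] C
            has_factor_if_matchable[OF sG P2] by blast
      qed
    qed
  qed
qed

theorem proposition2p1:
  fixes F :: "'b graph set" and G :: "'a graph"
  assumes F_graphs: "\<forall>H\<in>F. simple_graph H \<and> connected_graph H"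
    and P2_in_F: "\<exists>H\<in>F. isomorphic H P2"
    and G_graph: "finite_simple_graph G"
    and cond: "\<forall>X. X \<subseteq> verts G \<longrightarrow> b_F F (del_verts G X) \<le> card X"
  shows "has_factor F G"
proof -
  have sG: "simple_graph G" and fin: "finite (verts G)"
    using G_graph unfolding finite_simple_graph_def by auto
  obtain X where "X \<subseteq> verts G"
    and "\<forall>Y\<subseteq>verts G. excess G (hypomatchable_on G) (verts G) Y
      \<le> excess G (hypomatchable_on G) (verts G) X"
    using ex_excess_maximizer[OF fin] .
  moreover have "\<forall>Y\<subseteq>verts G. count_components G (hypomatchable_without_factor F G) (verts G - Y)
      \<le> card Y"
    using cond b_F_del_verts by metis
  ultimately have "has_factor F (induced_on G (verts G))"
    using has_factor_if_excess_maximizer[OF sG P2_in_F fin] by blast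
  then show ?thesis
    using induced_on_verts[OF sG] by simp
qed

end
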